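(* Let $\Sigma$ be a finite alphabet and $L\subseteq\Sigma^{++}$ a local language. Then $L$ is regional if and only if there exist $n\ge 1$ and simple regional tile sets $\theta_1,\dots,\theta_n$ over $\Sigma\cup\{\#\}$ such that $L=\bigcup_{1\le i\le n}LOC(\theta_i)$.
   Context: A picture over $\Sigma$ is a nonempty rectangular array of symbols of $\Sigma$, $\Sigma^{++}$ the set of all of them; $p(i,j)$ is the pixel in row $i$, column $j$; for $\#\notin\Sigma$, $\hat p$ is $p$ surrounded by a one-pixel frame of $\#$'s. A tile is a $2\times 2$ picture; $\llbracket q\rrbracket$ is the set of all $2\times2$ subpictures (on consecutive rows and columns) of $q$. For a finite set $\theta$ of tiles over $\Sigma\cup\{\#\}$, $LOC(\theta)=\{p\in\Sigma^{++}:\llbracket\hat p\rrbracket\subseteq\theta\}$; $L$ is local if $L=LOC(\theta)$ for some such $\theta$. A subdomain of $p$ is a rectangle $\{x,\dots,x'\}\times\{y,\dots,y'\}$ of positions; it is $C$-homogeneous (label $C$) if all its pixels equal $C$. A homogeneous partition of $p$ is a partition of its set of positions into homogeneous subdomains; it is regional if distinct subdomains have distinct labels; $p$ is regional if it admits a regional homogeneous partition; a language is regional if all its pictures are regional. Adjacency relations: for a tile $t$ define $\mathcal H_t,\mathcal V_t\subseteq(\Sigma\cup\{\#\})^2$ by: for $i=1,2$, $t(i,1)\,\mathcal H_t\,t(i,2)$ iff $t(i,1)\ne t(i,2)$; for $j=1,2$, $t(1,j)\,\mathcal V_t\,t(2,j)$ iff $t(1,j)\neq t(2,j)$. Let $\mathcal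 A_t=\mathcal H_t\cup\mathcal V_t$, $\mathcal A'_t=\mathcal H_t^{-1}\cup\mathcal V_t$, and for a tile set $\theta$ let $\mathcal A_\theta=\bigcup_{t\in\theta}\mathcal A_t$, $\mathcal A'_\theta=\bigcup_{t\in\theta}\mathcal A'_t$. A tile set $\theta$ is simple regional if both directed graphs on vertex set $\Sigma$ with edge relations $\mathcal A_\theta\cap\Sigma^2$ and $\mathcal A'_\theta\cap\Sigma^2$ are acyclic. *)

theory Defs
  imports Main
begin

text \<open>Pictures are represented as nonempty rectangular lists of rows (0-indexed);
  p(i,j) is p ! i ! j. The border symbol # is None, a symbol a of Sigma is Some a.\<close>

type_synonym 'a picture = "'a list list"

definition nrows :: "'a picture \<Rightarrow> nat" where "nrows p = length p"
definition ncols :: "'a picture \<Rightarrow> nat" where "ncols p = length (hd p)"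

definition pix :: "'a picture \<Rightarrow> nat \<Rightarrow> nat \<Rightarrow> 'a" where "pix p i j = p ! i ! j"

definition is_picture :: "'a picture \<Rightarrow> bool" where
  "is_picture p \<longleftrightarrow> p \<noteq> [] \<and> hd p \<noteq> [] \<and> (\<forall>r\<in>set p. length r = length (hd p))"

definition pictures :: "'a set \<Rightarrow> 'a picture set" where
  "pictures \<Sigma> = {p. is_picture p \<and> (\<forall>r\<in>set p. set r \<subseteq> \<Sigma>)}"

definition frame :: "'a picture \<Rightarrow> 'a option picture" where
  "frame p = [replicate (ncols p + 2) None] @
             map (\<lambda>r. [None] @ map Some r @ [None]) p @
             [replicate (ncols p + 2) None]"

definition subtiles :: "'b picture \<Rightarrow> 'b picture set" where
  "subtiles q = {[[pix q i j, pix q i (j+1)], [pix q (i+1) j, pix q (i+1) (j+1)]] | i j.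
                  i + 1 < nrows q \<and> j + 1 < ncols q}"

definition is_tile_over :: "'a set \<Rightarrow> 'a option picture \<Rightarrow> bool" where
  "is_tile_over \<Sigma> t \<longleftrightarrow> length t = 2 \<and> (\<forall>r\<in>set t. length r = 2 \<and> set r \<subseteq> insert None (Some ` \<Sigma>))"

definition tileset :: "'a set \<Rightarrow> 'a option picture set \<Rightarrow> bool" where
  "tileset \<Sigma> \<theta> \<longleftrightarrow> finite \<theta> \<and> (\<forall>t\<in>\<theta>. is_tile_over \<Sigma> t)"

definition LOC :: "'a set \<Rightarrow> 'a option picture set \<Rightarrow> 'a picture set" where
  "LOC \<Sigma> \<theta> = {p \<in> pictures \<Sigma>. subtiles (frame p) \<subseteq> \<theta>}"

definition local_lang :: "'a set \<Rightarrow> 'a picture set \<Rightarrow> bool" where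
  "local_lang \<Sigma> L \<longleftrightarrow> (\<exists>\<theta>. tileset \<Sigma> \<theta> \<and> L = LOC \<Sigma> \<theta>)"

definition positions :: "'a picture \<Rightarrow> (nat \<times> nat) set" where
  "positions p = {0..<nrows p} \<times> {0..<ncols p}"

definition is_subdomain :: "'a picture \<Rightarrow> (nat \<times> nat) set \<Rightarrow> bool" where
  "is_subdomain p D \<longleftrightarrow> (\<exists>x x' y y'. x \<le> x' \<and> x' < nrows p \<and> y \<le> y' \<and> y' < ncols p \<and>
                          D = {x..x'} \<times> {y..y'})"

definition homogeneous :: "'a picture \<Rightarrow> (nat \<times> nat) set \<Rightarrow> 'a \<Rightarrow> bool" where
  "homogeneous p D c \<longleftrightarrow> (\<forall>(i,j)\<in>D. pix p i j = c)"

definition homogeneous_partition :: "'a picture \<Rightarrow> (nat \<times> nat) set set \<Rightarrow> bool" where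
  "homogeneous_partition p P \<longleftrightarrow>
     \<Union>P = positions p \<and>
     (\<forall>D\<in>P. is_subdomain p D \<and> (\<exists>c. homogeneous p D c)) \<and>
     (\<forall>D\<in>P. \<forall>D'\<in>P. D \<noteq> D' \<longrightarrow> D \<inter> D' = {})"

definition regional_partition :: "'a picture \<Rightarrow> (nat \<times> nat) set set \<Rightarrow> bool" where
  "regional_partition p P \<longleftrightarrow> homogeneous_partition p P \<and>
     (\<exists>lab. (\<forall>D\<in>P. homogeneous p D (lab D)) \<and> inj_on lab P)"

definition regional_pic :: "'a picture \<Rightarrow> bool" where
  "regional_pic p \<longleftrightarrow> (\<exists>P. regional_partition p P)"

definition regional_lang :: "'a picture set \<Rightarrow> bool" where
  "regional_lang L \<longleftrightarrow> (\<forall>p\<in>L. regional_pic p)"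

text \<open>Adjacency relations of a tile (indices 0/1 instead of 1/2).\<close>
definition H_rel :: "'b picture \<Rightarrow> ('b \<times> 'b) set" where
  "H_rel t = {(pix t i 0, pix t i 1) | i. i < 2 \<and> pix t i 0 \<noteq> pix t i 1}"

definition V_rel :: "'b picture \<Rightarrow> ('b \<times> 'b) set" where
  "V_rel t = {(pix t 0 j, pix t 1 j) | j. j < 2 \<and> pix t 0 j \<noteq> pix t 1 j}"

definition A_tile :: "'b picture \<Rightarrow> ('b \<times> 'b) set" where
  "A_tile t = H_rel t \<union> V_rel t"

definition A'_tile :: "'b picture \<Rightarrow> ('b \<times> 'b) set" where
  "A'_tile t = (H_rel t)\<inverse> \<union> V_rel t"

definition A_set :: "'b picture set \<Rightarrow> ('b \<times> 'b) set" where
  "A_set \<theta> = (\<Union>t\<in>\<theta>. A_tile t)"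

definition A'_set :: "'b picture set \<Rightarrow> ('b \<times> 'b) set" where
  "A'_set \<theta> = (\<Union>t\<in>\<theta>. A'_tile t)"

definition restrict_Sigma :: "'a set \<Rightarrow> ('a option \<times> 'a option) set \<Rightarrow> ('a \<times> 'a) set" where
  "restrict_Sigma \<Sigma> R = {(a, b). a \<in> \<Sigma> \<and> b \<in> \<Sigma> \<and> (Some a, Some b) \<in> R}"

definition simple_regional :: "'a set \<Rightarrow> 'a option picture set \<Rightarrow> bool" where
  "simple_regional \<Sigma> \<theta> \<longleftrightarrow>
     acyclic (restrict_Sigma \<Sigma> (A_set \<theta>)) \<and> acyclic (restrict_Sigma \<Sigma> (A'_set \<theta>))"

end

theory Submission
  imports Defs
begin

(* A picture p with m rows and n columns is viewed as a colouring
   g = pix p of the m x n grid.  Its horizontal and vertical adjacency relations Hg, Vg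
   (pairs of distinct colours in neighbouring cells) are combined into Adj = Hg \<union> Vg and
   Adj' = Hg\<inverse> \<union> Vg, the grid analogues of the relations A and A' of a tile set.

   The core is a purely combinatorial characterisation (convex_iff_acyclic): every colour
   class is closed under bounding boxes ("convex colouring") iff Adj and Adj' are both
   acyclic.  Acyclicity gives convexity by following monotone paths in the grid (using the
   mirrored grid for Adj').  Conversely, in a convex colouring every colour occupies a
   rectangle, and a down-closed ("north-west closed") set of colours can always be enlarged
   by one colour; an abstract criterion (acyclic_by_extension) turns this into acyclicity.

   A picture is regional iff its colouring is convex, and the 2x2 tiles of the framed
   picture realise exactly Adj and Adj' on the alphabet, so p is regional iff the tile set
   of p is simple regional.  The theorem follows: a regional local language is the union of
   LOC over the (finitely many) tile sets of its pictures, and conversely every picture of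
   LOC(theta) with theta simple regional has a simple regional tile set. *)

definition Hg :: "(nat \<Rightarrow> nat \<Rightarrow> 'a) \<Rightarrow> nat \<Rightarrow> nat \<Rightarrow> ('a \<times> 'a) set" where
  "Hg g m n = {(g i j, g i (Suc j)) | i j. i < m \<and> Suc j < n \<and> g i j \<noteq> g i (Suc j)}"

definition Vg :: "(nat \<Rightarrow> nat \<Rightarrow> 'a) \<Rightarrow> nat \<Rightarrow> nat \<Rightarrow> ('a \<times> 'a) set" where
  "Vg g m n = {(g i j, g (Suc i) j) | i j. Suc i < m \<and> j < n \<and> g i j \<noteq> g (Suc i) j}"

lemma HgI: "i < m \<Longrightarrow> Suc j < n \<Longrightarrow> g i j \<noteq> g i (Suc j) \<Longrightarrow> (g i j, g i (Suc j)) \<in> Hg g m n"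
  unfolding Hg_def by blast

lemma VgI: "Suc i < m \<Longrightarrow> j < n \<Longrightarrow> g i j \<noteq> g (Suc i) j \<Longrightarrow> (g i j, g (Suc i) j) \<in> Vg g m n"
  unfolding Vg_def by blast

lemma HgE:
  assumes "(x, y) \<in> Hg g m n"
  obtains i j where "i < m" "Suc j < n" "x = g i j" "y = g i (Suc j)" "x \<noteq> y"
  using assms unfolding Hg_def by blast

lemma VgE:
  assumes "(x, y) \<in> Vg g m n"
  obtains i j where "Suc i < m" "j < n" "x = g i j" "y = g (Suc i) j" "x \<noteq> y"
  using assms unfolding Vg_def by blast

definition Adj :: "(nat \<Rightarrow> nat \<Rightarrow> 'a) \<Rightarrow> nat \<Rightarrow> nat \<Rightarrow> ('a \<times> 'a) set" where
  "Adj g m n = Hg g m n \<union> Vg g m n"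

definition Adj' :: "(nat \<Rightarrow> nat \<Rightarrow> 'a) \<Rightarrow> nat \<Rightarrow> nat \<Rightarrow> ('a \<times> 'a) set" where
  "Adj' g m n = (Hg g m n)\<inverse> \<union> Vg g m n"

lemma AdjE:
  assumes "(c, b) \<in> Adj g m n"
  obtains (horizontal) i j where "i < m" "Suc j < n" "c = g i j" "b = g i (Suc j)" "c \<noteq> b"
    | (vertical) i j where "Suc i < m" "j < n" "c = g i j" "b = g (Suc i) j" "c \<noteq> b"
  using assms unfolding Adj_def Hg_def Vg_def by blast

(* Reflecting the grid left-to-right reverses the horizontal adjacencies, so Adj of the
   mirrored colouring is Adj'. *)
definition mirror :: "nat \<Rightarrow> (nat \<Rightarrow> nat \<Rightarrow> 'a) \<Rightarrow> nat \<Rightarrow> nat \<Rightarrow> 'a" where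
  "mirror n g = (\<lambda>i j. g i (n - 1 - j))"

lemma Hg_mirror: "Hg (mirror n g) m n = (Hg g m n)\<inverse>"
proof (intro set_eqI iffI)
  fix x assume "x \<in> Hg (mirror n g) m n"
  then obtain i j where "x = (g i (Suc (n - 2 - j)), g i (n - 2 - j))" "i < m" "Suc j < n"
      "g i (n - 2 - j) \<noteq> g i (Suc (n - 2 - j))"
    unfolding Hg_def mirror_def by (auto simp: Suc_diff_Suc numeral_2_eq_2)
  then show "x \<in> (Hg g m n)\<inverse>" unfolding Hg_def by fastforce
next
  fix x assume "x \<in> (Hg g m n)\<inverse>"
  then obtain i j where "x = (g i (Suc j), g i j)" "i < m" "Suc j < n" "g i j \<noteq> g i (Suc j)"
    unfolding Hg_def by auto
  then show "x \<in> Hg (mirror n g) m n" unfolding Hg_def mirror_def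
    by (intro CollectI exI[of _ i] exI[of _ "n - 2 - j"]) (auto simp: Suc_diff_Suc numeral_2_eq_2)
qed

lemma Vg_mirror: "Vg (mirror n g) m n = Vg g m n"
proof (intro set_eqI iffI)
  fix x assume "x \<in> Vg (mirror n g) m n"
  then show "x \<in> Vg g m n" unfolding Vg_def mirror_def by fastforce
next
  fix x assume "x \<in> Vg g m n"
  then obtain i j where "x = (g i j, g (Suc i) j)" "Suc i < m" "j < n" "g i j \<noteq> g (Suc i) j"
    unfolding Vg_def by auto
  then show "x \<in> Vg (mirror n g) m n" unfolding Vg_def mirror_def
    by (intro CollectI exI[of _ i] exI[of _ "n - 1 - j"]) auto
qed

lemma Adj_mirror: "Adj (mirror n g) m n = Adj' g m n"
  unfolding Adj_def Adj'_def Hg_mirror Vg_mirror ..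

(* A colouring is convex if two cells of the same colour force that colour on their whole
   bounding box; for pictures this is exactly regionality (see below). *)
definition convex_colouring :: "(nat \<Rightarrow> nat \<Rightarrow> 'a) \<Rightarrow> nat \<Rightarrow> nat \<Rightarrow> bool" where
  "convex_colouring g m n \<longleftrightarrow> (\<forall>i j i' j' k l. i < m \<longrightarrow> j < n \<longrightarrow> i' < m \<longrightarrow> j' < n \<longrightarrow>
     g i j = g i' j' \<longrightarrow> min i i' \<le> k \<longrightarrow> k \<le> max i i' \<longrightarrow> min j j' \<le> l \<longrightarrow> l \<le> max j j' \<longrightarrow>
     g k l = g i j)"

lemma convex_colouringD:
  "convex_colouring g m n \<Longrightarrow> i < m \<Longrightarrow> j < n \<Longrightarrow> i' < m \<Longrightarrow> j' < n \<Longrightarrow> g i j = g i' j' \<Longrightarrow>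
   min i i' \<le> k \<Longrightarrow> k \<le> max i i' \<Longrightarrow> min j j' \<le> l \<Longrightarrow> l \<le> max j j' \<Longrightarrow> g k l = g i j"
  unfolding convex_colouring_def by blast

lemma convex_colouring_mirror:
  assumes "convex_colouring g m n" shows "convex_colouring (mirror n g) m n"
  unfolding convex_colouring_def mirror_def
proof (intro allI impI)
  fix i j i' j' k l
  assume h: "i < m" "j < n" "i' < m" "j' < n" "g i (n - 1 - j) = g i' (n - 1 - j')"
    "min i i' \<le> k" "k \<le> max i i'" "min j j' \<le> l" "l \<le> max j j'"
  have "min (n - 1 - j) (n - 1 - j') \<le> n - 1 - l" "n - 1 - l \<le> max (n - 1 - j) (n - 1 - j')"
    using h(2,4,8,9) by (auto simp: min_def max_def split: if_splits)
  with h show "g k (n - 1 - l) = g i (n - 1 - j)"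
    by (intro convex_colouringD[OF assms, of i "n - 1 - j" i' "n - 1 - j'"]) auto
qed

(* From acyclicity to convexity: Adj connects every cell to the cells south-east of it,
   so a differently coloured cell inside the bounding box of two equal colours closes a cycle. *)
lemma Adj_reach_row:
  assumes "i < m" "j \<le> l" "l < n"
  shows "(g i j, g i l) \<in> (Adj g m n)\<^sup>*"
  using assms
proof (induction l)
  case (Suc l)
  show ?case
  proof (cases "j = Suc l")
    case False
    then have "(g i j, g i l) \<in> (Adj g m n)\<^sup>*" using Suc by simp
    moreover have "(g i l, g i (Suc l)) \<in> (Adj g m n)\<^sup>="
      using Suc.prems unfolding Adj_def Hg_def by blast
    ultimately show ?thesis by (metis rtrancl_reflcl rtrancl_trans r_into_rtrancl)
  qed simp
qed simp

lemma Adj_reach_col: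
  assumes "i \<le> k" "k < m" "l < n"
  shows "(g i l, g k l) \<in> (Adj g m n)\<^sup>*"
  using assms
proof (induction k)
  case (Suc k)
  show ?case
  proof (cases "i = Suc k")
    case False
    then have "(g i l, g k l) \<in> (Adj g m n)\<^sup>*" using Suc by simp
    moreover have "(g k l, g (Suc k) l) \<in> (Adj g m n)\<^sup>="
      using Suc.prems unfolding Adj_def Vg_def by blast
    ultimately show ?thesis by (metis rtrancl_reflcl rtrancl_trans r_into_rtrancl)
  qed simp
qed simp

lemma Adj_reach:
  assumes "i \<le> k" "k < m" "j \<le> l" "l < n"
  shows "(g i j, g k l) \<in> (Adj g m n)\<^sup>*"
  using Adj_reach_row[of i m j l n g] Adj_reach_col[of i k m l n g] assms
  by (meson le_less_trans rtrancl_trans)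

lemma acyclic_box_monochrome:
  assumes acyc: "acyclic (Adj g m n)" and "i \<le> i'" "i' < m" "j \<le> j'" "j' < n"
    and same: "g i j = g i' j'" and "i \<le> k" "k \<le> i'" "j \<le> l" "l \<le> j'"
  shows "g k l = g i j"
proof (rule ccontr)
  assume ne: "g k l \<noteq> g i j"
  have "(g i j, g k l) \<in> (Adj g m n)\<^sup>*" "(g k l, g i' j') \<in> (Adj g m n)\<^sup>*"
    using assms Adj_reach[of i k m j l n g] Adj_reach[of k i' m l j' n g] by auto
  with ne have "(g i j, g i j) \<in> (Adj g m n)\<^sup>+"
    unfolding same by (metis rtrancl_eq_or_trancl rtrancl_trancl_trancl)
  with acyc show False unfolding acyclic_def by blast
qed

lemma acyclic_imp_convex:
  assumes acyc: "acyclic (Adj g m n)" and acyc': "acyclic (Adj' g m n)"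
  shows "convex_colouring g m n"
proof -
  have acyc_mirror: "acyclic (Adj (mirror n g) m n)" using acyc' by (simp add: Adj_mirror)
  have main: "g k l = g i j"
    if "i \<le> i'" "i' < m" "j < n" "j' < n" "g i j = g i' j'"
       "i \<le> k" "k \<le> i'" "min j j' \<le> l" "l \<le> max j j'" for i j i' j' k l
  proof (cases "j \<le> j'")
    case True
    then show ?thesis using acyclic_box_monochrome[OF acyc, of i i' j j' k l] that by auto
  next
    case False
    have "mirror n g k (n - 1 - l) = mirror n g i (n - 1 - j)"
      by (rule acyclic_box_monochrome[OF acyc_mirror, of i i' "n - 1 - j" "n - 1 - j'"])
         (use that False in \<open>auto simp: mirror_def\<close>)
    then show ?thesis using that False by (simp add: mirror_def)
  qed
  show ?thesis unfolding convex_colouring_def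
  proof (intro allI impI)
    fix i j i' j' k l
    assume h: "i < m" "j < n" "i' < m" "j' < n" "g i j = g i' j'" "min i i' \<le> k" "k \<le> max i i'"
      "min j j' \<le> l" "l \<le> max j j'"
    show "g k l = g i j"
    proof (cases "i \<le> i'")
      case True then show ?thesis using main[of i i' j j' k l] h by auto
    next
      case False then show ?thesis using main[of i' i j' j k l] h by (auto simp: min.commute max.commute)
    qed
  qed
qed

(* An irreflexive relation on a finite set V is acyclic if a family of predecessor-closed
   subsets of V, containing the empty set, can always be enlarged by one element until V is
   reached: otherwise a maximal member avoiding all cyclic elements could not be enlarged. *)
lemma acyclic_by_extension:
  fixes R :: "('a \<times> 'a) set" and V :: "'a set" and \<D> :: "'a set set"
  assumes "finite V" and "Range R \<subseteq> V" and irrefl: "\<And>a. (a, a) \<notin> R"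
    and "\<D> \<subseteq> Pow V" and "{} \<in> \<D>"
    and pred_closed: "\<And>D b c. D \<in> \<D> \<Longrightarrow> b \<in> D \<Longrightarrow> (c, b) \<in> R \<Longrightarrow> c \<in> D"
    and grow: "\<And>D. D \<in> \<D> \<Longrightarrow> D \<noteq> V \<Longrightarrow> \<exists>b\<in>V - D. insert b D \<in> \<D>"
  shows "acyclic R"
proof (rule ccontr)
  define C where "C = {b. (b, b) \<in> R\<^sup>+}"
  assume "\<not> acyclic R"
  then obtain a where "a \<in> C" unfolding acyclic_def C_def by blast
  have pred_in_C: "\<exists>c\<in>C. (c, b) \<in> R" if "b \<in> C" for b
  proof -
    have "(b, b) \<in> R\<^sup>+" using that unfolding C_def by simp
    then obtain c where "(b, c) \<in> R\<^sup>*" "(c, b) \<in> R" by (auto dest: tranclD2)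
    then have "(c, c) \<in> R\<^sup>+" by (rule rtrancl_into_trancl2[rotated])
    then show ?thesis using \<open>(c, b) \<in> R\<close> unfolding C_def by blast
  qed
  have "a \<in> V" using pred_in_C[OF \<open>a \<in> C\<close>] \<open>Range R \<subseteq> V\<close> by blast
  have "finite {D \<in> \<D>. D \<inter> C = {}}"
    by (rule finite_subset[of _ "Pow V"]) (use \<open>\<D> \<subseteq> Pow V\<close> \<open>finite V\<close> in auto)
  moreover have "{} \<in> {D \<in> \<D>. D \<inter> C = {}}" using \<open>{} \<in> \<D>\<close> by simp
  ultimately obtain D where D: "D \<in> \<D>" "D \<inter> C = {}"
    and maximal: "\<And>D'. D' \<in> \<D> \<Longrightarrow> D' \<inter> C = {} \<Longrightarrow> D \<subseteq> D' \<Longrightarrow> D = D'"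
    using finite_has_maximal[of "{D \<in> \<D>. D \<inter> C = {}}"] by (metis (mono_tags, lifting) empty_iff mem_Collect_eq)
  have "D \<noteq> V" using \<open>a \<in> C\<close> \<open>a \<in> V\<close> D(2) by blast
  then obtain b where b: "b \<notin> D" "insert b D \<in> \<D>" using grow D(1) by blast
  have "b \<in> C"
  proof (rule ccontr)
    assume "b \<notin> C"
    then have "D = insert b D" using maximal[OF b(2)] D(2) by blast
    then show False using b(1) by blast
  qed
  then obtain c where c: "c \<in> C" "(c, b) \<in> R" using pred_in_C by blast
  have "c \<noteq> b" using irrefl c(2) by blast
  moreover have "c \<in> insert b D" using pred_closed[OF b(2) _ c(2)] by blast
  ultimately show False using c(1) D(2) by blast
qed

locale convex_grid =
  fixes g :: "nat \<Rightarrow> nat \<Rightarrow> 'a" and m n :: nat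
  assumes convex: "convex_colouring g m n"
begin

definition colours :: "'a set" where
  "colours = {g i j | i j. i < m \<and> j < n}"

definition cells :: "'a \<Rightarrow> (nat \<times> nat) set" where
  "cells a = {(i, j). i < m \<and> j < n \<and> g i j = a}"

definition rmin :: "'a \<Rightarrow> nat" where "rmin a = Min (fst ` cells a)"
definition rmax :: "'a \<Rightarrow> nat" where "rmax a = Max (fst ` cells a)"
definition cmin :: "'a \<Rightarrow> nat" where "cmin a = Min (snd ` cells a)"
definition cmax :: "'a \<Rightarrow> nat" where "cmax a = Max (snd ` cells a)"

lemma finite_colours: "finite colours"
proof -
  have "colours = (\<lambda>(i, j). g i j) ` ({..<m} \<times> {..<n})" unfolding colours_def by auto
  then show ?thesis by simp
qed

lemma colours_cell: "i < m \<Longrightarrow> j < n \<Longrightarrow> g i j \<in> colours"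
  unfolding colours_def by blast

(* Convexity applied to the cells realising the four extremes of colour a shows that the
   colour fills its whole bounding box. *)
lemma cells_rect:
  assumes "a \<in> colours"
  shows "cells a = {rmin a..rmax a} \<times> {cmin a..cmax a}"
proof
  have fin: "finite (cells a)" by (rule finite_subset[of _ "{..<m} \<times> {..<n}"]) (auto simp: cells_def)
  show "cells a \<subseteq> {rmin a..rmax a} \<times> {cmin a..cmax a}"
  proof clarify
    fix k l assume "(k, l) \<in> cells a"
    then have "k \<in> fst ` cells a" "l \<in> snd ` cells a" by force+
    then show "k \<in> {rmin a..rmax a} \<and> l \<in> {cmin a..cmax a}"
      using fin unfolding rmin_def rmax_def cmin_def cmax_def by simp
  qed
  have ne: "cells a \<noteq> {}" using assms unfolding colours_def cells_def by blast
  have "rmin a \<in> fst ` cells a" "rmax a \<in> fst ` cells a"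
    "cmin a \<in> snd ` cells a" "cmax a \<in> snd ` cells a"
    using fin ne unfolding rmin_def rmax_def cmin_def cmax_def by simp_all
  then obtain c1 c2 r1 r2 where corners: "(rmin a, c1) \<in> cells a" "(rmax a, c2) \<in> cells a"
      "(r1, cmin a) \<in> cells a" "(r2, cmax a) \<in> cells a"
    by force
  show "{rmin a..rmax a} \<times> {cmin a..cmax a} \<subseteq> cells a"
  proof clarify
    fix k l assume kl: "k \<in> {rmin a..rmax a}" "l \<in> {cmin a..cmax a}"
    note c = corners[unfolded cells_def, simplified]
    have "k < m" "l < n" using kl c by auto
    have "g k c1 = a"
      using convex_colouringD[OF convex, of "rmin a" c1 "rmax a" c2 k c1] kl c by auto
    moreover have "g r1 l = a"
      using convex_colouringD[OF convex, of r1 "cmin a" r2 "cmax a" r1 l] kl c by auto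
    ultimately have "g k l = a"
      using convex_colouringD[OF convex, of k c1 r1 l k l] \<open>k < m\<close> \<open>l < n\<close> c by auto
    then show "(k, l) \<in> cells a" using \<open>k < m\<close> \<open>l < n\<close> by (simp add: cells_def)
  qed
qed

lemma rect_iff:
  assumes "a \<in> colours"
  shows "k < m \<and> l < n \<and> g k l = a \<longleftrightarrow> rmin a \<le> k \<and> k \<le> rmax a \<and> cmin a \<le> l \<and> l \<le> cmax a"
  using cells_rect[OF assms] unfolding set_eq_iff cells_def by auto

lemma rect_bounds:
  assumes "a \<in> colours"
  shows "rmin a \<le> rmax a" "rmax a < m" "cmin a \<le> cmax a" "cmax a < n"
proof -
  have "cells a \<noteq> {}" using assms unfolding colours_def cells_def by blast
  then show "rmin a \<le> rmax a" "cmin a \<le> cmax a" unfolding cells_rect[OF assms] by auto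
  then have "(rmax a, cmax a) \<in> cells a" unfolding cells_rect[OF assms] by simp
  then show "rmax a < m" "cmax a < n" unfolding cells_def by auto
qed

lemma cells_disjoint: "c \<noteq> c' \<Longrightarrow> cells c \<inter> cells c' = {}"
  unfolding cells_def by auto

lemma inj_on_cells: "inj_on cells colours"
proof (rule inj_onI)
  fix c c' assume "c \<in> colours" "cells c = cells c'"
  moreover have "cells c \<noteq> {}" using \<open>c \<in> colours\<close> unfolding colours_def cells_def by blast
  ultimately show "c = c'" using cells_disjoint by blast
qed

lemma cells_cover: "\<Union>(cells ` colours) = {0..<m} \<times> {0..<n}"
proof
  show "\<Union>(cells ` colours) \<subseteq> {0..<m} \<times> {0..<n}" unfolding cells_def by auto
  show "{0..<m} \<times> {0..<n} \<subseteq> \<Union>(cells ` colours)"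
  proof clarify
    fix i j assume "i \<in> {0..<m}" "j \<in> {0..<n}"
    then show "(i, j) \<in> \<Union>(cells ` colours)" unfolding cells_def using colours_cell by auto
  qed
qed

definition nw_closed :: "'a set \<Rightarrow> bool" where
  "nw_closed S \<longleftrightarrow> (\<forall>i j i' j'. i < m \<longrightarrow> j < n \<longrightarrow> g i j \<in> S \<longrightarrow> i' \<le> i \<longrightarrow> j' \<le> j \<longrightarrow> g i' j' \<in> S)"

lemma nw_closedD:
  "nw_closed S \<Longrightarrow> i < m \<Longrightarrow> j < n \<Longrightarrow> g i j \<in> S \<Longrightarrow> i' \<le> i \<Longrightarrow> j' \<le> j \<Longrightarrow> g i' j' \<in> S"
  unfolding nw_closed_def by blast

definition left_closed :: "'a set \<Rightarrow> 'a \<Rightarrow> bool" where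
  "left_closed S b \<longleftrightarrow> (0 < cmin b \<longrightarrow> (\<forall>k\<in>{rmin b..rmax b}. g k (cmin b - 1) \<in> S))"

definition top_closed :: "'a set \<Rightarrow> 'a \<Rightarrow> bool" where
  "top_closed S b \<longleftrightarrow> (0 < rmin b \<longrightarrow> (\<forall>l\<in>{cmin b..cmax b}. g (rmin b - 1) l \<in> S))"

lemma nw_closed_insert:
  assumes nw: "nw_closed S" and b: "b \<in> colours"
    and left: "left_closed S b" and top: "top_closed S b"
  shows "nw_closed (insert b S)"
  unfolding nw_closed_def
proof (intro allI impI)
  fix i j i' j' assume h: "i < m" "j < n" "g i j \<in> insert b S" "i' \<le> i" "j' \<le> j"
  show "g i' j' \<in> insert b S"
  proof (cases "g i j \<in> S")
    case True then show ?thesis using nw_closedD[OF nw h(1,2) _ h(4,5)] by simp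
  next
    case False
    then have ij: "rmin b \<le> i" "i \<le> rmax b" "cmin b \<le> j" "j \<le> cmax b"
      using rect_iff[OF b, of i j] h by auto
    have bounds: "rmax b < m" "cmax b < n" using rect_bounds[OF b(1)] by simp_all
    consider (inside) "rmin b \<le> i'" "cmin b \<le> j'" | (left_of) "j' < cmin b"
      | (above) "i' < rmin b" "cmin b \<le> j'" by linarith
    then show ?thesis
    proof cases
      case inside
      then have "g i' j' = b" using rect_iff[OF b, of i' j'] ij h by auto
      then show ?thesis by simp
    next
      case left_of
      define r where "r = max i' (rmin b)"
      have "g r (cmin b - 1) \<in> S" using left left_of ij h unfolding left_closed_def r_def by auto
      moreover have "r < m" "cmin b - 1 < n" "i' \<le> r" "j' \<le> cmin b - 1"
        using left_of ij h bounds by (auto simp: r_def)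
      ultimately have "g i' j' \<in> S" using nw_closedD[OF nw] by blast
      then show ?thesis by simp
    next
      case above
      have "g (rmin b - 1) j' \<in> S" using top above ij h unfolding top_closed_def by auto
      moreover have "rmin b - 1 < m" "j' < n" using above ij h bounds by auto
      ultimately have "g i' j' \<in> S" using nw_closedD[OF nw] above by simp
      then show ?thesis by simp
    qed
  qed
qed

(* The colour of a leftmost cell outside S is left-closed. *)
lemma exists_left_closed:
  assumes "colours - S \<noteq> {}"
  shows "\<exists>b\<in>colours - S. left_closed S b"
proof -
  define P where "P j \<longleftrightarrow> (\<exists>i<m. j < n \<and> g i j \<notin> S)" for j
  have "\<exists>j. P j" using assms unfolding colours_def P_def by blast
  then have "P (LEAST j. P j)" by (rule LeastI_ex)
  then obtain i1 j1 where ij1: "i1 < m" "j1 < n" "g i1 j1 \<notin> S" and j1: "j1 = (LEAST j. P j)"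
    unfolding P_def by blast
  define b where "b = g i1 j1"
  have b: "b \<in> colours" using ij1 colours_cell by (simp add: b_def)
  have "cmin b \<le> j1" using rect_iff[OF b, of i1 j1] ij1 by (simp add: b_def)
  have "left_closed S b"
    unfolding left_closed_def
  proof (intro impI ballI)
    fix k assume "0 < cmin b" "k \<in> {rmin b..rmax b}"
    show "g k (cmin b - 1) \<in> S"
    proof (rule ccontr)
      assume "g k (cmin b - 1) \<notin> S"
      moreover have "k < m" "cmin b - 1 < n"
        using \<open>k \<in> {rmin b..rmax b}\<close> rect_bounds[OF b] by auto
      ultimately have "P (cmin b - 1)" unfolding P_def by blast
      then have "j1 \<le> cmin b - 1" unfolding j1 by (rule Least_le)
      then show False using \<open>cmin b \<le> j1\<close> \<open>0 < cmin b\<close> by linarith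
    qed
  qed
  then show ?thesis using b ij1(3) by (auto simp: b_def)
qed

(* If a left-closed colour b is not top-closed, look at the leftmost cell l0 just above b
   whose colour is not in S; its left neighbour is in S (by minimality, or because b is
   left-closed when l0 is b's first column). *)
lemma first_open_cell_above:
  assumes nw: "nw_closed S" and b: "b \<in> colours"
    and left: "left_closed S b" and not_top: "\<not> top_closed S b"
  obtains l0 where "0 < rmin b" "cmin b \<le> l0" "l0 \<le> cmax b" "g (rmin b - 1) l0 \<notin> S"
    "0 < l0 \<Longrightarrow> g (rmin b - 1) (l0 - 1) \<in> S"
proof -
  define r where "r = rmin b - 1"
  have "0 < rmin b" and "\<exists>l. cmin b \<le> l \<and> l \<le> cmax b \<and> g r l \<notin> S"
    using not_top unfolding top_closed_def r_def by auto
  define l0 where "l0 = (LEAST l. cmin b \<le> l \<and> l \<le> cmax b \<and> g r l \<notin> S)"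
  have l0: "cmin b \<le> l0" "l0 \<le> cmax b" "g r l0 \<notin> S"
    using LeastI_ex[OF \<open>\<exists>l. _\<close>] unfolding l0_def by blast+
  have l0_least: "g r l \<in> S" if "cmin b \<le> l" "l < l0" for l
    using not_less_Least[of l "\<lambda>l. cmin b \<le> l \<and> l \<le> cmax b \<and> g r l \<notin> S"] that l0(2)
    unfolding l0_def by auto
  have bounds: "rmin b \<le> rmax b" "rmax b < m" "cmax b < n" using rect_bounds[OF b] by simp_all
  have "g r (l0 - 1) \<in> S" if "0 < l0"
  proof (cases "cmin b < l0")
    case True then show ?thesis using l0_least by simp
  next
    case False
    then have "l0 = cmin b" using l0(1) by simp
    then have "g (rmin b) (cmin b - 1) \<in> S" using left that bounds unfolding left_closed_def by simp
    then show ?thesis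
      using nw_closedD[OF nw, of "rmin b" "cmin b - 1" r "cmin b - 1"] \<open>l0 = cmin b\<close> bounds l0
      by (simp add: r_def)
  qed
  then show ?thesis using that \<open>0 < rmin b\<close> l0 unfolding r_def by blast
qed

(* The colour d of that cell starts in column l0, lies strictly above b, and is left-closed;
   so a left-closed colour that is not top-closed is dominated by one further up. *)
lemma top_blocked:
  assumes nw: "nw_closed S" and b: "b \<in> colours"
    and left: "left_closed S b" and not_top: "\<not> top_closed S b"
  shows "\<exists>d\<in>colours - S. left_closed S d \<and> cmin b \<le> cmin d \<and> rmin d < rmin b"
proof -
  obtain l0 where l0: "0 < rmin b" "cmin b \<le> l0" "l0 \<le> cmax b" "g (rmin b - 1) l0 \<notin> S"
    and left_nbr: "0 < l0 \<Longrightarrow> g (rmin b - 1) (l0 - 1) \<in> S"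
    using first_open_cell_above[OF assms] by blast
  define r where "r = rmin b - 1"
  have bounds: "rmin b \<le> rmax b" "rmax b < m" "cmax b < n" using rect_bounds[OF b] by simp_all
  have "r < m" "l0 < n" using bounds l0 by (auto simp: r_def)
  define d where "d = g r l0"
  have d: "d \<in> colours" "d \<notin> S"
    using colours_cell[OF \<open>r < m\<close> \<open>l0 < n\<close>] l0 by (simp_all add: d_def r_def)
  have d_rect: "rmin d \<le> r" "r \<le> rmax d" "cmin d \<le> l0" "l0 \<le> cmax d"
    using rect_iff[OF d(1), of r l0] \<open>r < m\<close> \<open>l0 < n\<close> by (simp_all add: d_def)
  have cmin_d: "cmin d = l0"
  proof (rule ccontr)
    assume "cmin d \<noteq> l0"
    then have "cmin d \<le> l0 - 1" "0 < l0" using d_rect by auto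
    then have "g r (l0 - 1) = d" using rect_iff[OF d(1), of r "l0 - 1"] d_rect by auto
    then show False using left_nbr[OF \<open>0 < l0\<close>] d(2) by (simp add: r_def)
  qed
  have above: "rmax d < rmin b"
  proof (rule ccontr)
    assume "\<not> rmax d < rmin b"
    then have "g (rmin b) l0 = d" using rect_iff[OF d(1), of "rmin b" l0] d_rect by (auto simp: r_def)
    moreover have "g (rmin b) l0 = b" using rect_iff[OF b, of "rmin b" l0] bounds l0 by auto
    ultimately show False using d_rect(1) \<open>0 < rmin b\<close> by (simp add: r_def)
  qed
  have "left_closed S d"
    unfolding left_closed_def
  proof (intro impI ballI)
    fix k assume "0 < cmin d" "k \<in> {rmin d..rmax d}"
    then show "g k (cmin d - 1) \<in> S"
      using nw_closedD[OF nw \<open>r < m\<close> _ left_nbr[folded r_def], of k "l0 - 1"] cmin_d above \<open>l0 < n\<close>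
      by (auto simp: r_def)
  qed
  then show ?thesis using d cmin_d l0(2) above d_rect by auto
qed

(* Every proper nw-closed set can be enlarged: a left-closed colour that is rightmost, and
   topmost among the rightmost ones, is also top-closed by top_blocked. *)
lemma nw_closed_extension:
  assumes nw: "nw_closed S" and "colours - S \<noteq> {}"
  shows "\<exists>b\<in>colours - S. nw_closed (insert b S)"
proof -
  define K where "K = {b \<in> colours - S. left_closed S b}"
  define order where "order = measures [\<lambda>b. n - cmin b, rmin]" \<comment> \<open>rightmost first, then topmost\<close>
  obtain b0 where "b0 \<in> K" using exists_left_closed[OF assms(2)] unfolding K_def by blast
  moreover have "wf order" unfolding order_def by (rule wf_measures)
  ultimately obtain b where b: "b \<in> K" and extremal: "\<And>d. (d, b) \<in> order \<Longrightarrow> d \<notin> K"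
    by (metis wfE_min)
  have "top_closed S b"
  proof (rule ccontr)
    assume "\<not> top_closed S b"
    then obtain d where d: "d \<in> K" "cmin b \<le> cmin d" "rmin d < rmin b"
      using top_blocked[OF nw] b unfolding K_def by blast
    have "cmin d < n" using rect_bounds(3,4)[of d] d(1) unfolding K_def by auto
    then have "(d, b) \<in> order" using d(2,3) unfolding order_def by auto
    then show False using extremal d(1) by blast
  qed
  then show ?thesis using nw_closed_insert[OF nw] b unfolding K_def by blast
qed

(* Nw-closed sets contain the Adj-predecessors of their elements, so the nw-closed sets of
   colours satisfy the hypotheses of acyclic_by_extension. *)
lemma nw_closed_pred:
  assumes nw: "nw_closed S" and "b \<in> S" and "(c, b) \<in> Adj g m n"
  shows "c \<in> S"
  using assms(3)
proof (cases rule: AdjE)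
  case (horizontal i j)
  then show ?thesis using nw_closedD[OF nw, of i "Suc j" i j] \<open>b \<in> S\<close> by simp
next
  case (vertical i j)
  then show ?thesis using nw_closedD[OF nw, of "Suc i" j i j] \<open>b \<in> S\<close> by simp
qed

lemma Adj_Range: "Range (Adj g m n) \<subseteq> colours"
proof
  fix b assume "b \<in> Range (Adj g m n)"
  then obtain c where "(c, b) \<in> Adj g m n" by blast
  then show "b \<in> colours" by (cases rule: AdjE) (auto intro: colours_cell)
qed

theorem acyclic_Adj: "acyclic (Adj g m n)"
proof (rule acyclic_by_extension[where V = colours and \<D> = "{S. S \<subseteq> colours \<and> nw_closed S}"])
  show "(a, a) \<notin> Adj g m n" for a by (auto elim: AdjE)
  show "c \<in> D" if "D \<in> {S. S \<subseteq> colours \<and> nw_closed S}" "b \<in> D" "(c, b) \<in> Adj g m n" for D b c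
    using nw_closed_pred that by blast
  show "\<exists>b\<in>colours - D. insert b D \<in> {S. S \<subseteq> colours \<and> nw_closed S}"
    if "D \<in> {S. S \<subseteq> colours \<and> nw_closed S}" "D \<noteq> colours" for D
    using nw_closed_extension[of D] that colours_cell by blast
qed (use finite_colours Adj_Range in \<open>auto simp: nw_closed_def\<close>)

end

theorem convex_iff_acyclic:
  "convex_colouring g m n \<longleftrightarrow> acyclic (Adj g m n) \<and> acyclic (Adj' g m n)"
proof
  assume convex: "convex_colouring g m n"
  have "acyclic (Adj g m n)"
    by (rule convex_grid.acyclic_Adj) (unfold_locales, fact convex)
  moreover have "acyclic (Adj (mirror n g) m n)"
    by (rule convex_grid.acyclic_Adj) (unfold_locales, rule convex_colouring_mirror[OF convex])
  ultimately show "acyclic (Adj g m n) \<and> acyclic (Adj' g m n)" by (simp add: Adj_mirror)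
qed (blast intro: acyclic_imp_convex)

(* Regional pictures are exactly those whose colouring is convex: the labels of a regional
   partition are the colours, and conversely the colour classes of a convex colouring are
   rectangles forming a regional partition. *)
lemma regional_imp_convex:
  assumes "regional_pic p"
  shows "convex_colouring (pix p) (nrows p) (ncols p)"
proof -
  obtain P lab where part: "homogeneous_partition p P"
    and hom: "\<forall>D\<in>P. homogeneous p D (lab D)" and inj: "inj_on lab P"
    using assms unfolding regional_pic_def regional_partition_def by blast
  have block: "\<exists>D\<in>P. (i, j) \<in> D \<and> pix p i j = lab D" if "i < nrows p" "j < ncols p" for i j
  proof -
    have "(i, j) \<in> \<Union>P" using part that unfolding homogeneous_partition_def positions_def by simp
    then obtain D where "D \<in> P" "(i, j) \<in> D" by blast
    then show ?thesis using hom unfolding homogeneous_def by blast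
  qed
  show ?thesis unfolding convex_colouring_def
  proof (intro allI impI)
    fix i j i' j' k l
    assume h: "i < nrows p" "j < ncols p" "i' < nrows p" "j' < ncols p" "pix p i j = pix p i' j'"
      "min i i' \<le> k" "k \<le> max i i'" "min j j' \<le> l" "l \<le> max j j'"
    obtain D where D: "D \<in> P" "(i, j) \<in> D" "pix p i j = lab D" using block h by blast
    obtain D' where D': "D' \<in> P" "(i', j') \<in> D'" "pix p i' j' = lab D'" using block h by blast
    have "D' = D" using inj_onD[OF inj _ D'(1) D(1)] D(3) D'(3) h(5) by simp
    obtain x x' y y' where xy: "D = {x..x'} \<times> {y..y'}"
      using part D(1) unfolding homogeneous_partition_def is_subdomain_def by meson
    have "x \<le> min i i'" "max i i' \<le> x'" "y \<le> min j j'" "max j j' \<le> y'"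
      using D(2) D'(2) unfolding \<open>D' = D\<close> xy by auto
    then have "(k, l) \<in> D" using h(6-9) unfolding xy by (simp add: min_def max_def split: if_splits)
    then show "pix p k l = pix p i j" using hom D unfolding homogeneous_def by auto
  qed
qed

lemma convex_imp_regional:
  assumes "convex_colouring (pix p) (nrows p) (ncols p)"
  shows "regional_pic p"
proof -
  interpret convex_grid "pix p" "nrows p" "ncols p" by unfold_locales (rule assms)
  define P where "P = cells ` colours"
  define lab where "lab = inv_into colours cells"
  have "homogeneous_partition p P"
    unfolding homogeneous_partition_def
  proof (intro conjI ballI impI)
    show "\<Union>P = positions p" unfolding P_def positions_def by (rule cells_cover)
  next
    fix D assume "D \<in> P"
    then obtain c where c: "c \<in> colours" "D = cells c" unfolding P_def by blast
    show "is_subdomain p D"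
      unfolding is_subdomain_def c(2) cells_rect[OF c(1)] using rect_bounds[OF c(1)] by blast
    show "\<exists>c. homogeneous p D c" using c(2) unfolding homogeneous_def cells_def by blast
  next
    fix D D' assume "D \<in> P" "D' \<in> P" "D \<noteq> D'"
    then obtain c c' where "D = cells c" "D' = cells c'" "c \<noteq> c'" unfolding P_def by blast
    then show "D \<inter> D' = {}" using cells_disjoint by simp
  qed
  moreover have "\<forall>D\<in>P. homogeneous p D (lab D)"
  proof
    fix D assume "D \<in> P"
    then obtain c where c: "c \<in> colours" "D = cells c" unfolding P_def by blast
    then have "lab D = c" unfolding lab_def using inv_into_f_f[OF inj_on_cells] by simp
    then show "homogeneous p D (lab D)" unfolding c(2) homogeneous_def cells_def by auto
  qed
  moreover have "inj_on lab P" unfolding lab_def P_def by (rule inj_on_inv_into) simp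
  ultimately show ?thesis unfolding regional_pic_def regional_partition_def by blast
qed

lemma H_rel_tile: "H_rel [[w, x], [y, z]] = {(w, x), (y, z)} - Id"
proof
  show "H_rel [[w, x], [y, z]] \<subseteq> {(w, x), (y, z)} - Id"
    unfolding H_rel_def pix_def less_2_cases_iff by auto
  have "(w, x) \<in> H_rel [[w, x], [y, z]]" if "w \<noteq> x"
    unfolding H_rel_def pix_def using that by (intro CollectI exI[of _ 0]) simp
  moreover have "(y, z) \<in> H_rel [[w, x], [y, z]]" if "y \<noteq> z"
    unfolding H_rel_def pix_def using that by (intro CollectI exI[of _ 1]) simp
  ultimately show "{(w, x), (y, z)} - Id \<subseteq> H_rel [[w, x], [y, z]]" by auto
qed

lemma V_rel_tile: "V_rel [[w, x], [y, z]] = {(w, y), (x, z)} - Id"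
proof
  show "V_rel [[w, x], [y, z]] \<subseteq> {(w, y), (x, z)} - Id"
    unfolding V_rel_def pix_def less_2_cases_iff by auto
  have "(w, y) \<in> V_rel [[w, x], [y, z]]" if "w \<noteq> y"
    unfolding V_rel_def pix_def using that by (intro CollectI exI[of _ 0]) simp
  moreover have "(x, z) \<in> V_rel [[w, x], [y, z]]" if "x \<noteq> z"
    unfolding V_rel_def pix_def using that by (intro CollectI exI[of _ 1]) simp
  ultimately show "{(w, y), (x, z)} - Id \<subseteq> V_rel [[w, x], [y, z]]" by auto
qed

abbreviation tile_at :: "'b picture \<Rightarrow> nat \<Rightarrow> nat \<Rightarrow> 'b picture" where
  "tile_at q i j \<equiv> [[pix q i j, pix q i (Suc j)], [pix q (Suc i) j, pix q (Suc i) (Suc j)]]"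

lemma subtiles_iff:
  "t \<in> subtiles q \<longleftrightarrow> (\<exists>i j. Suc i < nrows q \<and> Suc j < ncols q \<and> t = tile_at q i j)"
  unfolding subtiles_def by auto

lemma H_subtiles:
  assumes "2 \<le> nrows q"
  shows "(\<Union>t\<in>subtiles q. H_rel t) = Hg (pix q) (nrows q) (ncols q)"
proof
  show "(\<Union>t\<in>subtiles q. H_rel t) \<subseteq> Hg (pix q) (nrows q) (ncols q)"
  proof
    fix x assume "x \<in> (\<Union>t\<in>subtiles q. H_rel t)"
    then obtain t where "t \<in> subtiles q" "x \<in> H_rel t" by blast
    then obtain i j where "Suc i < nrows q" "Suc j < ncols q" "x \<in> H_rel (tile_at q i j)"
      unfolding subtiles_iff by blast
    then consider "x = (pix q i j, pix q i (Suc j))" "pix q i j \<noteq> pix q i (Suc j)"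
      | "x = (pix q (Suc i) j, pix q (Suc i) (Suc j))" "pix q (Suc i) j \<noteq> pix q (Suc i) (Suc j)"
      unfolding H_rel_tile by blast
    then show "x \<in> Hg (pix q) (nrows q) (ncols q)"
      by cases (use \<open>Suc i < nrows q\<close> \<open>Suc j < ncols q\<close> in \<open>auto intro: HgI\<close>)
  qed
  show "Hg (pix q) (nrows q) (ncols q) \<subseteq> (\<Union>t\<in>subtiles q. H_rel t)"
  proof
    fix x assume "x \<in> Hg (pix q) (nrows q) (ncols q)"
    then obtain i j where x: "x = (pix q i j, pix q i (Suc j))" "i < nrows q" "Suc j < ncols q"
        "pix q i j \<noteq> pix q i (Suc j)"
      unfolding Hg_def by blast
    show "x \<in> (\<Union>t\<in>subtiles q. H_rel t)"
    proof (cases "Suc i < nrows q")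
      case True
      then have "tile_at q i j \<in> subtiles q" using x unfolding subtiles_iff by auto
      moreover have "x \<in> H_rel (tile_at q i j)" unfolding H_rel_tile using x by simp
      ultimately show ?thesis by blast
    next
      case False
      then have "tile_at q (i - 1) j \<in> subtiles q"
        unfolding subtiles_iff by (intro exI[of _ "i - 1"] exI[of _ j]) (use x assms in auto)
      moreover have "Suc (i - 1) = i" using False assms by simp
      then have "x \<in> H_rel (tile_at q (i - 1) j)" unfolding H_rel_tile using x by simp
      ultimately show ?thesis by blast
    qed
  qed
qed

lemma V_subtiles:
  assumes "2 \<le> ncols q"
  shows "(\<Union>t\<in>subtiles q. V_rel t) = Vg (pix q) (nrows q) (ncols q)"
proof
  show "(\<Union>t\<in>subtiles q. V_rel t) \<subseteq> Vg (pix q) (nrows q) (ncols q)"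
  proof
    fix x assume "x \<in> (\<Union>t\<in>subtiles q. V_rel t)"
    then obtain t where "t \<in> subtiles q" "x \<in> V_rel t" by blast
    then obtain i j where "Suc i < nrows q" "Suc j < ncols q" "x \<in> V_rel (tile_at q i j)"
      unfolding subtiles_iff by blast
    then consider "x = (pix q i j, pix q (Suc i) j)" "pix q i j \<noteq> pix q (Suc i) j"
      | "x = (pix q i (Suc j), pix q (Suc i) (Suc j))" "pix q i (Suc j) \<noteq> pix q (Suc i) (Suc j)"
      unfolding V_rel_tile by blast
    then show "x \<in> Vg (pix q) (nrows q) (ncols q)"
      by cases (use \<open>Suc i < nrows q\<close> \<open>Suc j < ncols q\<close> in \<open>auto intro: VgI\<close>)
  qed
  show "Vg (pix q) (nrows q) (ncols q) \<subseteq> (\<Union>t\<in>subtiles q. V_rel t)"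
  proof
    fix x assume "x \<in> Vg (pix q) (nrows q) (ncols q)"
    then obtain i j where x: "x = (pix q i j, pix q (Suc i) j)" "Suc i < nrows q" "j < ncols q"
        "pix q i j \<noteq> pix q (Suc i) j"
      unfolding Vg_def by blast
    show "x \<in> (\<Union>t\<in>subtiles q. V_rel t)"
    proof (cases "Suc j < ncols q")
      case True
      then have "tile_at q i j \<in> subtiles q" using x unfolding subtiles_iff by auto
      moreover have "x \<in> V_rel (tile_at q i j)" unfolding V_rel_tile using x by simp
      ultimately show ?thesis by blast
    next
      case False
      then have "tile_at q i (j - 1) \<in> subtiles q"
        unfolding subtiles_iff by (intro exI[of _ i] exI[of _ "j - 1"]) (use x assms in auto)
      moreover have "Suc (j - 1) = j" using False assms by simp
      then have "x \<in> V_rel (tile_at q i (j - 1))" unfolding V_rel_tile using x by simp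
      ultimately show ?thesis by blast
    qed
  qed
qed

(* The framed picture as a function on the enlarged grid; the frame adds adjacencies only
   between a symbol and the border. *)
definition framed :: "(nat \<Rightarrow> nat \<Rightarrow> 'a) \<Rightarrow> nat \<Rightarrow> nat \<Rightarrow> nat \<Rightarrow> nat \<Rightarrow> 'a option" where
  "framed g m n i j = (if 0 < i \<and> i \<le> m \<and> 0 < j \<and> j \<le> n then Some (g (i - 1) (j - 1)) else None)"

lemma framed_Some:
  "framed g m n i j = Some a \<longleftrightarrow> 0 < i \<and> i \<le> m \<and> 0 < j \<and> j \<le> n \<and> a = g (i - 1) (j - 1)"
  unfolding framed_def by auto

lemma Hg_framed: "(Some a, Some b) \<in> Hg (framed g m n) (m + 2) (n + 2) \<longleftrightarrow> (a, b) \<in> Hg g m n"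
proof
  assume "(Some a, Some b) \<in> Hg (framed g m n) (m + 2) (n + 2)"
  then obtain i j where "Some a = framed g m n i j" "Some b = framed g m n i (Suc j)" "Some a \<noteq> Some b"
    by (rule HgE)
  then have "a \<noteq> b" "framed g m n i j = Some a" "framed g m n i (Suc j) = Some b" by metis+
  then have "0 < i" "i \<le> m" "0 < j" "Suc j \<le> n" "a = g (i - 1) (j - 1)" "b = g (i - 1) (Suc (j - 1))"
    unfolding framed_Some by auto
  then show "(a, b) \<in> Hg g m n" using HgI[of "i - 1" m "j - 1" n g] \<open>a \<noteq> b\<close> by simp
next
  assume "(a, b) \<in> Hg g m n"
  then obtain i j where "i < m" "Suc j < n" "a = g i j" "b = g i (Suc j)" "a \<noteq> b"
    by (rule HgE)
  then show "(Some a, Some b) \<in> Hg (framed g m n) (m + 2) (n + 2)"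
    using HgI[of "Suc i" "m + 2" "Suc j" "n + 2" "framed g m n"] by (simp add: framed_def)
qed

lemma Vg_framed: "(Some a, Some b) \<in> Vg (framed g m n) (m + 2) (n + 2) \<longleftrightarrow> (a, b) \<in> Vg g m n"
proof
  assume "(Some a, Some b) \<in> Vg (framed g m n) (m + 2) (n + 2)"
  then obtain i j where "Some a = framed g m n i j" "Some b = framed g m n (Suc i) j" "Some a \<noteq> Some b"
    by (rule VgE)
  then have "a \<noteq> b" "framed g m n i j = Some a" "framed g m n (Suc i) j = Some b" by metis+
  then have "0 < i" "Suc i \<le> m" "0 < j" "j \<le> n" "a = g (i - 1) (j - 1)" "b = g (Suc (i - 1)) (j - 1)"
    unfolding framed_Some by auto
  then show "(a, b) \<in> Vg g m n" using VgI[of "i - 1" m "j - 1" n g] \<open>a \<noteq> b\<close> by simp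
next
  assume "(a, b) \<in> Vg g m n"
  then obtain i j where "Suc i < m" "j < n" "a = g i j" "b = g (Suc i) j" "a \<noteq> b"
    by (rule VgE)
  then show "(Some a, Some b) \<in> Vg (framed g m n) (m + 2) (n + 2)"
    using VgI[of "Suc i" "m + 2" "Suc j" "n + 2" "framed g m n"] by (simp add: framed_def)
qed

lemma Hg_cong:
  assumes "\<And>i j. i < m \<Longrightarrow> j < n \<Longrightarrow> g i j = g' i j"
  shows "Hg g m n = Hg g' m n"
  unfolding Hg_def
proof (intro Collect_cong ex_cong1)
  fix x i j
  show "(x = (g i j, g i (Suc j)) \<and> i < m \<and> Suc j < n \<and> g i j \<noteq> g i (Suc j)) \<longleftrightarrow>
        (x = (g' i j, g' i (Suc j)) \<and> i < m \<and> Suc j < n \<and> g' i j \<noteq> g' i (Suc j))"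
    using assms[of i j] assms[of i "Suc j"] by (cases "i < m \<and> Suc j < n") auto
qed

lemma Vg_cong:
  assumes "\<And>i j. i < m \<Longrightarrow> j < n \<Longrightarrow> g i j = g' i j"
  shows "Vg g m n = Vg g' m n"
  unfolding Vg_def
proof (intro Collect_cong ex_cong1)
  fix x i j
  show "(x = (g i j, g (Suc i) j) \<and> Suc i < m \<and> j < n \<and> g i j \<noteq> g (Suc i) j) \<longleftrightarrow>
        (x = (g' i j, g' (Suc i) j) \<and> Suc i < m \<and> j < n \<and> g' i j \<noteq> g' (Suc i) j)"
    using assms[of i j] assms[of "Suc i" j] by (cases "Suc i < m \<and> j < n") auto
qed

lemma picture_rows:
  assumes "p \<in> pictures \<Sigma>" and "i < nrows p"
  shows "length (p ! i) = ncols p" and "set (p ! i) \<subseteq> \<Sigma>"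
proof -
  have "p ! i \<in> set p" using assms(2) unfolding nrows_def by simp
  then show "length (p ! i) = ncols p" "set (p ! i) \<subseteq> \<Sigma>"
    using assms(1) unfolding pictures_def is_picture_def ncols_def by blast+
qed

lemma pix_in_alphabet:
  assumes "p \<in> pictures \<Sigma>" "i < nrows p" "j < ncols p"
  shows "pix p i j \<in> \<Sigma>"
proof -
  have "p ! i ! j \<in> set (p ! i)" using assms picture_rows(1)[OF assms(1,2)] by simp
  then show ?thesis using picture_rows(2)[OF assms(1,2)] unfolding pix_def by blast
qed

lemma frame_dims: "nrows (frame p) = nrows p + 2" "ncols (frame p) = ncols p + 2"
  unfolding frame_def nrows_def ncols_def by simp_all

lemma pix_frame:
  assumes p: "p \<in> pictures \<Sigma>" and i: "i < nrows p + 2" and j: "j < ncols p + 2"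
  shows "pix (frame p) i j = framed (pix p) (nrows p) (ncols p) i j"
proof (cases i)
  case 0
  then show ?thesis using j unfolding frame_def pix_def framed_def by (simp add: nth_Cons' nth_replicate)
next
  case (Suc i')
  show ?thesis
  proof (cases "i' < nrows p")
    case True
    have row: "frame p ! i = [None] @ map Some (p ! i') @ [None]"
      using True Suc unfolding frame_def nrows_def by (simp add: nth_append)
    show ?thesis
      using row picture_rows(1)[OF p True] j Suc True
      by (cases j) (auto simp: pix_def framed_def nth_append)
  next
    case False
    then have "i' = nrows p" using i Suc by simp
    then have "frame p ! i = replicate (ncols p + 2) None"
      using Suc unfolding frame_def nrows_def by (simp add: nth_append)
    then show ?thesis using j \<open>i' = nrows p\<close> Suc by (simp add: pix_def framed_def nth_Cons' nth_replicate)
  qed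
qed

lemma picture_rels_alphabet:
  assumes p: "p \<in> pictures \<Sigma>"
  shows "Hg (pix p) (nrows p) (ncols p) \<subseteq> \<Sigma> \<times> \<Sigma>" and "Vg (pix p) (nrows p) (ncols p) \<subseteq> \<Sigma> \<times> \<Sigma>"
proof -
  show "Hg (pix p) (nrows p) (ncols p) \<subseteq> \<Sigma> \<times> \<Sigma>"
    by (auto elim!: HgE intro!: pix_in_alphabet[OF p])
  show "Vg (pix p) (nrows p) (ncols p) \<subseteq> \<Sigma> \<times> \<Sigma>"
    by (auto elim!: VgE intro!: pix_in_alphabet[OF p])
qed

lemma frame_grid_rels:
  assumes p: "p \<in> pictures \<Sigma>"
  defines "F \<equiv> framed (pix p) (nrows p) (ncols p)"
  shows "(\<Union>t\<in>subtiles (frame p). H_rel t) = Hg F (nrows p + 2) (ncols p + 2)"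
    and "(\<Union>t\<in>subtiles (frame p). V_rel t) = Vg F (nrows p + 2) (ncols p + 2)"
proof -
  have "2 \<le> nrows (frame p)" "2 \<le> ncols (frame p)" by (simp_all add: frame_dims)
  moreover have "\<And>i j. i < nrows p + 2 \<Longrightarrow> j < ncols p + 2 \<Longrightarrow> pix (frame p) i j = F i j"
    unfolding F_def by (rule pix_frame[OF p])
  ultimately show "(\<Union>t\<in>subtiles (frame p). H_rel t) = Hg F (nrows p + 2) (ncols p + 2)"
    and "(\<Union>t\<in>subtiles (frame p). V_rel t) = Vg F (nrows p + 2) (ncols p + 2)"
    using H_subtiles[of "frame p"] V_subtiles[of "frame p"] Hg_cong Vg_cong
    unfolding frame_dims by metis+
qed

lemma restrict_A_frame:
  assumes p: "p \<in> pictures \<Sigma>"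
  shows "restrict_Sigma \<Sigma> (A_set (subtiles (frame p))) = Adj (pix p) (nrows p) (ncols p)"
proof -
  have A: "A_set (subtiles (frame p)) = (\<Union>t\<in>subtiles (frame p). H_rel t) \<union> (\<Union>t\<in>subtiles (frame p). V_rel t)"
    unfolding A_set_def A_tile_def by blast
  show ?thesis
    unfolding set_eq_iff split_paired_All restrict_Sigma_def mem_Collect_eq prod.case A Un_iff
      frame_grid_rels[OF p] Hg_framed Vg_framed Adj_def
    using picture_rels_alphabet[OF p] by blast
qed

lemma restrict_A'_frame:
  assumes p: "p \<in> pictures \<Sigma>"
  shows "restrict_Sigma \<Sigma> (A'_set (subtiles (frame p))) = Adj' (pix p) (nrows p) (ncols p)"
proof -
  have A': "A'_set (subtiles (frame p)) = (\<Union>t\<in>subtiles (frame p). H_rel t)\<inverse> \<union> (\<Union>t\<in>subtiles (frame p). V_rel t)"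
    unfolding A'_set_def A'_tile_def by blast
  show ?thesis
    unfolding set_eq_iff split_paired_All restrict_Sigma_def mem_Collect_eq prod.case A' Un_iff
      converse_iff frame_grid_rels[OF p] Hg_framed Vg_framed Adj'_def
    using picture_rels_alphabet[OF p] by blast
qed

lemma regional_iff_simple_regional:
  assumes "p \<in> pictures \<Sigma>"
  shows "regional_pic p \<longleftrightarrow> simple_regional \<Sigma> (subtiles (frame p))"
  unfolding simple_regional_def restrict_A_frame[OF assms] restrict_A'_frame[OF assms]
    convex_iff_acyclic[symmetric]
  using regional_imp_convex convex_imp_regional by blast

(* Simple regionality passes to subsets, so every picture of LOC(theta) with theta simple
   regional is regional. *)
lemma simple_regional_subset:
  assumes "simple_regional \<Sigma> \<theta>" and "\<theta>' \<subseteq> \<theta>"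
  shows "simple_regional \<Sigma> \<theta>'"
proof -
  have "restrict_Sigma \<Sigma> (A_set \<theta>') \<subseteq> restrict_Sigma \<Sigma> (A_set \<theta>)"
    "restrict_Sigma \<Sigma> (A'_set \<theta>') \<subseteq> restrict_Sigma \<Sigma> (A'_set \<theta>)"
    using assms(2) unfolding restrict_Sigma_def A_set_def A'_set_def by blast+
  then show ?thesis using assms(1) acyclic_subset unfolding simple_regional_def by blast
qed

lemma LOC_simple_regional_imp_regional:
  assumes "simple_regional \<Sigma> \<theta>" and "q \<in> LOC \<Sigma> \<theta>"
  shows "regional_pic q"
  using assms regional_iff_simple_regional simple_regional_subset unfolding LOC_def by blast

lemma simple_regional_empty: "simple_regional \<Sigma> {}"
  unfolding simple_regional_def restrict_Sigma_def A_set_def A'_set_def by (simp add: acyclic_def)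

lemma LOC_empty: "LOC \<Sigma> {} = {}"
proof -
  have "tile_at (frame p) 0 0 \<in> subtiles (frame p)" for p :: "'a picture"
    unfolding subtiles_iff frame_dims by auto
  then show ?thesis unfolding LOC_def by blast
qed

lemma LOC_mono: "\<theta> \<subseteq> \<theta>' \<Longrightarrow> LOC \<Sigma> \<theta> \<subseteq> LOC \<Sigma> \<theta>'"
  unfolding LOC_def by blast

lemma picture_in_own_LOC: "p \<in> pictures \<Sigma> \<Longrightarrow> p \<in> LOC \<Sigma> (subtiles (frame p))"
  unfolding LOC_def by blast

lemma enumerate_finite_nonempty:
  assumes "finite A" and "A \<noteq> {}"
  shows "\<exists>n::nat. \<exists>\<theta>. n \<ge> 1 \<and> \<theta> ` {1..n} = A"
proof -
  obtain h where "bij_betw h {1..card A} A" using ex_bij_betw_nat_finite_1[OF assms(1)] by blast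
  moreover have "card A \<ge> 1" using assms by (simp add: Suc_leI card_gt_0_iff)
  ultimately show ?thesis unfolding bij_betw_def by blast
qed

(* A regional local language LOC(theta0) is the union of LOC over the tile sets of its
   pictures (together with the empty tile set, so that the family is nonempty); each of
   these is contained in theta0 and simple regional. *)
lemma regional_LOC_decomposition:
  assumes \<theta>0: "tileset \<Sigma> \<theta>0" and regional: "regional_lang (LOC \<Sigma> \<theta>0)"
  shows "\<exists>n::nat. \<exists>\<theta> :: nat \<Rightarrow> 'a option picture set. n \<ge> 1 \<and>
    (\<forall>i\<in>{1..n}. tileset \<Sigma> (\<theta> i) \<and> simple_regional \<Sigma> (\<theta> i)) \<and>
    LOC \<Sigma> \<theta>0 = (\<Union>i\<in>{1..n}. LOC \<Sigma> (\<theta> i))"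
proof -
  define T where "T = insert {} ((\<lambda>p. subtiles (frame p)) ` LOC \<Sigma> \<theta>0)"
  have T_sub: "T \<subseteq> Pow \<theta>0" unfolding T_def LOC_def by blast
  have "finite \<theta>0" using \<theta>0 unfolding tileset_def by simp
  then have "finite T" using finite_subset[OF T_sub] by simp
  moreover have "T \<noteq> {}" unfolding T_def by simp
  ultimately have "\<exists>n::nat. \<exists>\<theta>. n \<ge> 1 \<and> \<theta> ` {1..n} = T" by (rule enumerate_finite_nonempty)
  then obtain n and \<theta> :: "nat \<Rightarrow> 'a option picture set" where "n \<ge> 1" and \<theta>: "\<theta> ` {1..n} = T"
    by blast
  have "simple_regional \<Sigma> t" if t: "t \<in> T" for t
  proof (cases "t = {}")
    case False
    then obtain p where "p \<in> LOC \<Sigma> \<theta>0" "t = subtiles (frame p)" using t unfolding T_def by blast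
    then show ?thesis
      using regional regional_iff_simple_regional unfolding regional_lang_def LOC_def by blast
  qed (simp add: simple_regional_empty)
  moreover have "tileset \<Sigma> t" if "t \<in> T" for t
    using that T_sub \<theta>0 finite_subset unfolding tileset_def by blast
  moreover have "LOC \<Sigma> \<theta>0 = (\<Union>t\<in>T. LOC \<Sigma> t)"
  proof
    show "LOC \<Sigma> \<theta>0 \<subseteq> (\<Union>t\<in>T. LOC \<Sigma> t)"
      using picture_in_own_LOC unfolding T_def LOC_def by blast
    show "(\<Union>t\<in>T. LOC \<Sigma> t) \<subseteq> LOC \<Sigma> \<theta>0"
      using LOC_empty LOC_mono[of _ \<theta>0 \<Sigma>] unfolding T_def LOC_def by blast
  qed
  ultimately have "\<forall>i\<in>{1..n}. tileset \<Sigma> (\<theta> i) \<and> simple_regional \<Sigma> (\<theta> i)"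
    and "LOC \<Sigma> \<theta>0 = (\<Union>i\<in>{1..n}. LOC \<Sigma> (\<theta> i))"
    unfolding \<theta>[symmetric] by (simp_all add: image_image)
  then show ?thesis using \<open>n \<ge> 1\<close> by blast
qed

theorem proposition4:
  fixes \<Sigma> :: "'a set" and L :: "'a picture set"
  assumes "finite \<Sigma>" and "local_lang \<Sigma> L"
  shows "regional_lang L \<longleftrightarrow>
    (\<exists>n::nat. \<exists>\<theta> :: nat \<Rightarrow> 'a option picture set. n \<ge> 1 \<and>
       (\<forall>i\<in>{1..n}. tileset \<Sigma> (\<theta> i) \<and> simple_regional \<Sigma> (\<theta> i)) \<and>
       L = (\<Union>i\<in>{1..n}. LOC \<Sigma> (\<theta> i)))"
proof
  assume "regional_lang L"
  moreover obtain \<theta>0 where "tileset \<Sigma> \<theta>0" and "L = LOC \<Sigma> \<theta>0"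
    using assms(2) unfolding local_lang_def by blast
  ultimately show "\<exists>n::nat. \<exists>\<theta> :: nat \<Rightarrow> 'a option picture set. n \<ge> 1 \<and>
      (\<forall>i\<in>{1..n}. tileset \<Sigma> (\<theta> i) \<and> simple_regional \<Sigma> (\<theta> i)) \<and>
      L = (\<Union>i\<in>{1..n}. LOC \<Sigma> (\<theta> i))"
    using regional_LOC_decomposition by blast
next
  assume "\<exists>n::nat. \<exists>\<theta> :: nat \<Rightarrow> 'a option picture set. n \<ge> 1 \<and>
      (\<forall>i\<in>{1..n}. tileset \<Sigma> (\<theta> i) \<and> simple_regional \<Sigma> (\<theta> i)) \<and>
      L = (\<Union>i\<in>{1..n}. LOC \<Sigma> (\<theta> i))"
  then show "regional_lang L"
    unfolding regional_lang_def using LOC_simple_regional_imp_regional by blast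
qed

end
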